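(* Let $\mathbf{PG}$ be a consistent PCFG with start symbol $s$, no $\varepsilon$-rule, no useless nonterminal, and in which every rule has positive selection probability. Let $\ell$ be a prefix, let $\mathrm{Expl}(G_\ell)$ be its explanation graph and $\mathrm{Eq}(G_\ell)$ its system of probability equations (defined in the context). Let $S=\{A_1,\dots,A_K\}$ be an SCC of defined goals of $\mathrm{Expl}(G_\ell)$, and write the probability equations of the goals in $S$ as $\mathbf{X}_A=M\mathbf{X}_A+\mathbf{Y}_A$ with $\mathbf{X}_A=(P(A_1),\dots,P(A_K))^T$, as described in the context. Then this system has a unique solution, namely $\mathbf{X}_A=(I-M)^{-1}\mathbf{Y}_A$ (in particular $I-M$ is invertible).
   Context: Grammar: the underlying CFG has finite terminal set $\Sigma$, finite nonterminal set $N$, start symbol $s\in N$; every rule $A\to\alpha$ has $\alpha\in(N\cup\Sigma)^+$; no nonterminal is useless (each has a rule occurring in some derivation of a terminal string from $s$). $\mathbf{PG}$ assigns to each rule $A\to\alpha$ a selection probability $\theta_{A\to\alpha}>0$ with $\sum_\alpha\theta_{A\to\alpha}=1$ for each $A$; the probability of a derivation is the product of the probabilities of the rules used; $\mathbf{PG}$ is consistent if the total probability of terminal strings derived from $s$ is $1$. A prefix is a nonempty string $\ell\in\Sigma^+$ that is an initial segment of some terminal string derivable from $s$. Explanation graph. For a prefix $\ell$ consider ground atoms $q(\ell)$, $p(\beta,u,v)$ with $\beta\in(N\cup\Sigma)^*$, $u,v\in\Sigma^*$, and switch atoms $m(A\to\alpha)$. Consider all ground clauses: (C0) $q(\ell)\leftarrow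 p(s,\ell,\varepsilon)$; (C1) $p(\varepsilon,u,u)\leftarrow$ (empty body), for all $u$; (C2) for $a\in\Sigma$: $p(a\beta,a,\varepsilon)\leftarrow$ (empty body); and $p(a\beta,av,w)\leftarrow p(\beta,v,w)$ whenever $v\neq\varepsilon$; (C3) for $A\in N$ and each rule $A\to\alpha$: $p(A\beta,u,\varepsilon)\leftarrow m(A\to\alpha)\wedge p(\alpha,u,\varepsilon)$; and $p(A\beta,u,w)\leftarrow m(A\to\alpha)\wedge p(\alpha,u,v)\wedge p(\beta,v,w)$ whenever $v\neq\varepsilon$. A $p$- or $q$-atom is provable if it lies in the least Herbrand model of these clauses with all $m$-atoms true. The defined goals of $\mathrm{Expl}(G_\ell)$ form the smallest set containing $q(\ell)$ such that whenever $H$ is a defined goal and $H\leftarrow\alpha$ is one of the clauses above whose $p$-atoms are all provable, every $p$-atom of $\alpha$ is a defined goal. The defining formula of $H$ is $H\Leftrightarrow\alpha_1\vee\dots\vee\alpha_M$, the $\alpha_i$ being the bodies of all such clauses with head $H$ whose $p$-atoms are all provable. $H$ is a parent of $C$ if $C$ occurs in some $\alpha_i$; ancestor is the transitive closure; SCCs are the classes of the equivalence "$A=B$ or each is an ancestor of the other". Probability equations $\mathrm{Eq}(G_\ell)$: one real unknown $P(H)$ per defined goal $H$, with equation $P(H)=\sum_{i=1}^M\big(\prod_{C\text{ defined goal in }\alpha_i}P(C)\big)\big(\prod_{m(A\to\alpha)\text{ in }\alpha_i}\theta_{A\to\alpha}\big)$ (empty products equal $1$). This system has a least non-negative solution $\mathbf{X}_\infty$.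 Each disjunct $\alpha_i$ of a defining formula contains at most one defined goal from any given SCC, and all other defined goals in the defining formulas of goals in $S$ lie in SCCs not equal to $S$. Writing $\mathbf{X}_A=(P(A_1),\dots,P(A_K))^T$, the equations for $A_1,\dots,A_K$ take the form $\mathbf{X}_A=M\mathbf{X}_A+\mathbf{Y}_A$, where $M_{jk}$ is the sum, over disjuncts of the defining formula of $A_j$ that contain $A_k$, of the product of the $\theta$'s and of the $P(C)$ for the other defined goals $C$ in that disjunct, and $(\mathbf{Y}_A)_j$ is the sum, over disjuncts of the defining formula of $A_j$ containing no goal of $S$, of the corresponding products; here every $P(C)$ with $C\notin S$ is treated as a constant equal to its value in $\mathbf{X}_\infty$. $I$ is the $K\times K$ identity matrix. *)

theory Defs
  imports "HOL-Analysis.Infinite_Sum" "Jordan_Normal_Form.Matrix"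
begin

datatype ('n, 't) sym = NT 'n | Tm 't

type_synonym ('n, 't) rule = "'n \<times> ('n, 't) sym list"

text \<open>Parse trees (= leftmost derivations).\<close>
datatype ('n, 't) ptree = Lf 't | Nd 'n "('n, 't) ptree list"

fun root :: "('n, 't) ptree \<Rightarrow> ('n, 't) sym" where
  "root (Lf a) = Tm a"
| "root (Nd A ts) = NT A"

fun yield :: "('n, 't) ptree \<Rightarrow> 't list" where
  "yield (Lf a) = [a]"
| "yield (Nd A ts) = concat (map yield ts)"

fun valid_tree :: "('n, 't) rule set \<Rightarrow> ('n, 't) ptree \<Rightarrow> bool" where
  "valid_tree R (Lf a) = True"
| "valid_tree R (Nd A ts) = ((A, map root ts) \<in> R \<and> (\<forall>t \<in> set ts. valid_tree R t))"

fun nts_of :: "('n, 't) ptree \<Rightarrow> 'n set" where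
  "nts_of (Lf a) = {}"
| "nts_of (Nd A ts) = insert A (\<Union>t \<in> set ts. nts_of t)"

fun tree_prob :: "(('n, 't) rule \<Rightarrow> real) \<Rightarrow> ('n, 't) ptree \<Rightarrow> real" where
  "tree_prob \<theta> (Lf a) = 1"
| "tree_prob \<theta> (Nd A ts) = \<theta> (A, map root ts) * prod_list (map (tree_prob \<theta>) ts)"

definition derivs_from :: "('n, 't) rule set \<Rightarrow> 'n \<Rightarrow> ('n, 't) ptree set" where
  "derivs_from R s = {t. valid_tree R t \<and> root t = NT s}"

definition consistent_pcfg ::
  "('n::finite, 't::finite) rule set \<Rightarrow> 'n \<Rightarrow> (('n, 't) rule \<Rightarrow> real) \<Rightarrow> bool" where
  "consistent_pcfg R s \<theta> \<longleftrightarrow>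
     finite R
   \<and> (\<forall>(A, \<alpha>) \<in> R. \<alpha> \<noteq> [])
   \<and> (\<forall>A. \<exists>t \<in> derivs_from R s. A \<in> nts_of t)
   \<and> (\<forall>r \<in> R. \<theta> r > 0)
   \<and> (\<forall>A. (\<Sum>r \<in> {r \<in> R. fst r = A}. \<theta> r) = 1)
   \<and> (tree_prob \<theta> has_sum 1) (derivs_from R s)"

definition is_prefix :: "('n, 't) rule set \<Rightarrow> 'n \<Rightarrow> 't list \<Rightarrow> bool" where
  "is_prefix R s lp \<longleftrightarrow> lp \<noteq> [] \<and> (\<exists>t \<in> derivs_from R s. (\<exists>v. yield t = lp @ v))"

datatype ('n, 't) atom =
    Qa "'t list"
  | Pa "('n, 't) sym list" "'t list" "'t list"
  | Msw "('n, 't) rule"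

fun is_p :: "('n, 't) atom \<Rightarrow> bool" where
  "is_p (Pa \<beta> u v) = True"
| "is_p _ = False"

text \<open>Ground clauses (head, body) of the prefix program G_l.\<close>
inductive_set clauses ::
  "('n, 't) rule set \<Rightarrow> 'n \<Rightarrow> 't list \<Rightarrow> (('n, 't) atom \<times> ('n, 't) atom list) set"
  for R s lp where
  C0: "(Qa lp, [Pa [NT s] lp []]) \<in> clauses R s lp"
| C1: "(Pa [] u u, []) \<in> clauses R s lp"
| C2a: "(Pa (Tm a # \<beta>) [a] [], []) \<in> clauses R s lp"
| C2b: "v \<noteq> [] \<Longrightarrow> (Pa (Tm a # \<beta>) (a # v) w, [Pa \<beta> v w]) \<in> clauses R s lp"
| C3a: "(A, \<alpha>) \<in> R \<Longrightarrow>
          (Pa (NT A # \<beta>) u [], [Msw (A, \<alpha>), Pa \<alpha> u []]) \<in> clauses R s lp"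
| C3b: "(A, \<alpha>) \<in> R \<Longrightarrow> v \<noteq> [] \<Longrightarrow>
          (Pa (NT A # \<beta>) u w, [Msw (A, \<alpha>), Pa \<alpha> u v, Pa \<beta> v w]) \<in> clauses R s lp"

text \<open>Least Herbrand model with all switch atoms true (restricted to p/q atoms).\<close>
inductive_set provable ::
  "('n, 't) rule set \<Rightarrow> 'n \<Rightarrow> 't list \<Rightarrow> ('n, 't) atom set"
  for R s lp where
  "(H, b) \<in> clauses R s lp \<Longrightarrow> (\<forall>C \<in> set b. is_p C \<longrightarrow> C \<in> provable R s lp)
     \<Longrightarrow> H \<in> provable R s lp"

text \<open>Bodies of the defining formula of H: bodies of clauses with head H
  whose p-atoms are all provable.\<close>
definition bodies ::
  "('n, 't) rule set \<Rightarrow> 'n \<Rightarrow> 't list \<Rightarrow> ('n, 't) atom \<Rightarrow> ('n, 't) atom list set" where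
  "bodies R s lp H = {b. (H, b) \<in> clauses R s lp \<and> (\<forall>C \<in> set b. is_p C \<longrightarrow> C \<in> provable R s lp)}"

inductive_set defined_goals ::
  "('n, 't) rule set \<Rightarrow> 'n \<Rightarrow> 't list \<Rightarrow> ('n, 't) atom set"
  for R s lp where
  top: "Qa lp \<in> defined_goals R s lp"
| step: "H \<in> defined_goals R s lp \<Longrightarrow> b \<in> bodies R s lp H \<Longrightarrow> C \<in> set b \<Longrightarrow> is_p C
     \<Longrightarrow> C \<in> defined_goals R s lp"

definition parent_rel :: "('n, 't) rule set \<Rightarrow> 'n \<Rightarrow> 't list \<Rightarrow> (('n, 't) atom \<times> ('n, 't) atom) set" where
  "parent_rel R s lp = {(H, C). H \<in> defined_goals R s lp \<and> is_p C \<and>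
                               (\<exists>b \<in> bodies R s lp H. C \<in> set b)}"

definition is_scc :: "('n, 't) rule set \<Rightarrow> 'n \<Rightarrow> 't list \<Rightarrow> ('n, 't) atom set \<Rightarrow> bool" where
  "is_scc R s lp S \<longleftrightarrow> (\<exists>A \<in> defined_goals R s lp.
      S = {B \<in> defined_goals R s lp. A = B \<or> ((A, B) \<in> (parent_rel R s lp)\<^sup>+ \<and> (B, A) \<in> (parent_rel R s lp)\<^sup>+)})"

fun atom_val :: "(('n, 't) rule \<Rightarrow> real) \<Rightarrow> (('n, 't) atom \<Rightarrow> real) \<Rightarrow> ('n, 't) atom \<Rightarrow> real" where
  "atom_val \<theta> X (Msw r) = \<theta> r"
| "atom_val \<theta> X C = X C"

definition eq_rhs ::
  "('n, 't) rule set \<Rightarrow> 'n \<Rightarrow> 't list \<Rightarrow> (('n, 't) rule \<Rightarrow> real) \<Rightarrow> (('n, 't) atom \<Rightarrow> real)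
     \<Rightarrow> ('n, 't) atom \<Rightarrow> real" where
  "eq_rhs R s lp \<theta> X H = (\<Sum>b \<in> bodies R s lp H. prod_list (map (atom_val \<theta> X) b))"

definition solves_eq :: "('n, 't) rule set \<Rightarrow> 'n \<Rightarrow> 't list \<Rightarrow> (('n, 't) rule \<Rightarrow> real)
     \<Rightarrow> (('n, 't) atom \<Rightarrow> real) \<Rightarrow> bool" where
  "solves_eq R s lp \<theta> X \<longleftrightarrow> (\<forall>H \<in> defined_goals R s lp. X H = eq_rhs R s lp \<theta> X H)"

definition least_nonneg_solution :: "('n, 't) rule set \<Rightarrow> 'n \<Rightarrow> 't list \<Rightarrow> (('n, 't) rule \<Rightarrow> real)
     \<Rightarrow> (('n, 't) atom \<Rightarrow> real) \<Rightarrow> bool" where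
  "least_nonneg_solution R s lp \<theta> X \<longleftrightarrow>
     (\<forall>H \<in> defined_goals R s lp. X H \<ge> 0) \<and> solves_eq R s lp \<theta> X \<and>
     (\<forall>Y. (\<forall>H \<in> defined_goals R s lp. Y H \<ge> 0) \<and> solves_eq R s lp \<theta> Y \<longrightarrow>
          (\<forall>H \<in> defined_goals R s lp. X H \<le> Y H))"

text \<open>Coefficients of the SCC system X_A = M X_A + Y_A, with goals outside S
  evaluated at Xinf.\<close>
definition scc_M :: "('n, 't) rule set \<Rightarrow> 'n \<Rightarrow> 't list \<Rightarrow> (('n, 't) rule \<Rightarrow> real)
     \<Rightarrow> (('n, 't) atom \<Rightarrow> real) \<Rightarrow> ('n, 't) atom \<Rightarrow> ('n, 't) atom \<Rightarrow> real" where
  "scc_M R s lp \<theta> Xinf Aj Ak =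
     (\<Sum>b \<in> {b \<in> bodies R s lp Aj. Ak \<in> set b}. prod_list (map (atom_val \<theta> Xinf) (remove1 Ak b)))"

definition scc_Y :: "('n, 't) rule set \<Rightarrow> 'n \<Rightarrow> 't list \<Rightarrow> (('n, 't) rule \<Rightarrow> real)
     \<Rightarrow> (('n, 't) atom \<Rightarrow> real) \<Rightarrow> ('n, 't) atom set \<Rightarrow> ('n, 't) atom \<Rightarrow> real" where
  "scc_Y R s lp \<theta> Xinf S Aj =
     (\<Sum>b \<in> {b \<in> bodies R s lp Aj. set b \<inter> S = {}}. prod_list (map (atom_val \<theta> Xinf) b))"

definition scc_mat :: "('n, 't) rule set \<Rightarrow> 'n \<Rightarrow> 't list \<Rightarrow> (('n, 't) rule \<Rightarrow> real)
     \<Rightarrow> (('n, 't) atom \<Rightarrow> real) \<Rightarrow> nat \<Rightarrow> (nat \<Rightarrow> ('n, 't) atom) \<Rightarrow> real mat" where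
  "scc_mat R s lp \<theta> Xinf K e = mat K K (\<lambda>(j, k). scc_M R s lp \<theta> Xinf (e j) (e k))"

definition scc_vec :: "('n, 't) rule set \<Rightarrow> 'n \<Rightarrow> 't list \<Rightarrow> (('n, 't) rule \<Rightarrow> real)
     \<Rightarrow> (('n, 't) atom \<Rightarrow> real) \<Rightarrow> ('n, 't) atom set \<Rightarrow> nat \<Rightarrow> (nat \<Rightarrow> ('n, 't) atom) \<Rightarrow> real vec" where
  "scc_vec R s lp \<theta> Xinf S K e = vec K (\<lambda>j. scc_Y R s lp \<theta> Xinf S (e j))"

end

theory Submission
  imports Defs "Jordan_Normal_Form.Determinant" "HOL-Library.Product_Lexorder"
begin

text \<open>Rank a goal p(\<gamma>, u, w) by the pair (|u|, -|w|), ordered lexicographically. Along every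
  edge of the explanation graph the rank does not increase, so all goals of an SCC share one
  rank, and the only clauses linking two goals of an SCC are the left-corner expansions
  p(A\<beta>, u, w) \<leftarrow> m(A\<rightarrow>\<alpha>) \<and> p(\<alpha>, u, w) (followed by p(\<epsilon>, w, w) if w \<noteq> \<epsilon>). Hence M is a
  nonnegative matrix whose entries are the \<theta>(A\<rightarrow>\<alpha>) and whose row sums are at most 1.
  If x = M x with x \<noteq> 0, the goals where |x| is maximal form a set closed under all
  left-corner expansions; then the leftmost path of any parse tree of the leading
  nonterminal of such a goal would never reach a leaf. Every nonterminal is useful, so
  I - M is injective, hence invertible, and the restriction of the solution to S solves
  X = M X + Y.\<close>

lemma prod_list_map_remove1:
  fixes f :: "'a \<Rightarrow> 'b::comm_monoid_mult"
  shows "x \<in> set xs \<Longrightarrow> prod_list (map f xs) = f x * prod_list (map f (remove1 x xs))"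
  by (induction xs) (auto simp: ac_simps)

lemma max_modulus_of_substochastic_fixpoint:
  fixes M :: "'i \<Rightarrow> 'i \<Rightarrow> real" and x :: "'i \<Rightarrow> real"
  assumes "finite I" and "j \<in> I"
    and nonneg: "\<And>k. k \<in> I \<Longrightarrow> 0 \<le> M j k"
    and row: "(\<Sum>k\<in>I. M j k) \<le> 1"
    and fixpoint: "x j = (\<Sum>k\<in>I. M j k * x k)"
    and maximal: "\<And>k. k \<in> I \<Longrightarrow> \<bar>x k\<bar> \<le> \<bar>x j\<bar>"
    and "x j \<noteq> 0"
  shows "(\<Sum>k\<in>I. M j k) = 1" and "\<And>k. k \<in> I \<Longrightarrow> 0 < M j k \<Longrightarrow> \<bar>x k\<bar> = \<bar>x j\<bar>"
proof -
  let ?m = "\<bar>x j\<bar>"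
  have "?m \<le> (\<Sum>k\<in>I. M j k * \<bar>x k\<bar>)"
  proof -
    have "?m \<le> (\<Sum>k\<in>I. \<bar>M j k * x k\<bar>)"
      using fixpoint sum_abs by metis
    also have "\<dots> = (\<Sum>k\<in>I. M j k * \<bar>x k\<bar>)"
      using nonneg by (intro sum.cong) (auto simp: abs_mult)
    finally show ?thesis .
  qed
  moreover have "(\<Sum>k\<in>I. M j k * \<bar>x k\<bar>) \<le> ?m * (\<Sum>k\<in>I. M j k)"
    unfolding sum_distrib_left
  proof (intro sum_mono)
    fix k assume "k \<in> I"
    show "M j k * \<bar>x k\<bar> \<le> ?m * M j k"
      using mult_right_mono[OF maximal nonneg, OF \<open>k \<in> I\<close> \<open>k \<in> I\<close>] by (simp add: mult.commute)
  qed
  moreover have "?m > 0"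
    using \<open>x j \<noteq> 0\<close> by simp
  ultimately have "?m * 1 \<le> ?m * (\<Sum>k\<in>I. M j k)"
    by linarith
  then show "(\<Sum>k\<in>I. M j k) = 1"
    using row \<open>?m > 0\<close> by (simp add: mult_le_cancel_left_pos)
  then have "(\<Sum>k\<in>I. M j k * (?m - \<bar>x k\<bar>)) = ?m - (\<Sum>k\<in>I. M j k * \<bar>x k\<bar>)"
    by (simp add: right_diff_distrib sum_subtractf mult.commute[of "M j _"] flip: sum_distrib_left)
  also have "\<dots> \<le> 0"
    using \<open>?m \<le> (\<Sum>k\<in>I. M j k * \<bar>x k\<bar>)\<close> by simp
  finally have "(\<Sum>k\<in>I. M j k * (?m - \<bar>x k\<bar>)) \<le> 0" .
  have terms_nonneg: "0 \<le> M j k * (?m - \<bar>x k\<bar>)" if "k \<in> I" for k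
    using nonneg maximal that by simp
  then have "0 \<le> (\<Sum>k\<in>I. M j k * (?m - \<bar>x k\<bar>))"
    by (rule sum_nonneg)
  with \<open>(\<Sum>k\<in>I. M j k * (?m - \<bar>x k\<bar>)) \<le> 0\<close>
  have "\<forall>k\<in>I. M j k * (?m - \<bar>x k\<bar>) = 0"
    using sum_nonneg_eq_0_iff[OF \<open>finite I\<close> terms_nonneg] by simp
  then show "\<And>k. k \<in> I \<Longrightarrow> 0 < M j k \<Longrightarrow> \<bar>x k\<bar> = \<bar>x j\<bar>"
    by auto
qed

lemma fixpoint_iff_one_minus_mult:
  fixes M :: "'a::comm_ring_1 mat"
  assumes "M \<in> carrier_mat n n" and "x \<in> carrier_vec n" and "Y \<in> carrier_vec n"
  shows "x = M *\<^sub>v x + Y \<longleftrightarrow> (1\<^sub>m n - M) *\<^sub>v x = Y"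
proof -
  have "(1\<^sub>m n - M) *\<^sub>v x = x - M *\<^sub>v x"
    using assms by (simp add: minus_mult_distrib_mat_vec[OF one_carrier_mat])
  moreover have "x = M *\<^sub>v x + Y \<longleftrightarrow> x - M *\<^sub>v x = Y"
    using assms by (auto simp: vec_eq_iff diff_eq_eq add.commute)
  ultimately show ?thesis
    by simp
qed

lemma invertible_mat_if_kernel_trivial:
  fixes A :: "'a::field mat"
  assumes A: "A \<in> carrier_mat n n"
    and kernel: "\<And>x. x \<in> carrier_vec n \<Longrightarrow> A *\<^sub>v x = 0\<^sub>v n \<Longrightarrow> x = 0\<^sub>v n"
  shows "invertible_mat A"
proof -
  have "det A \<noteq> 0"
    using det_0_iff_vec_prod_zero[OF A] kernel by blast
  from det_non_zero_imp_unit[OF A this, of "()"]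
  obtain B where "B \<in> carrier_mat n n" "B * A = 1\<^sub>m n" "A * B = 1\<^sub>m n"
    unfolding Units_def ring_mat_def by auto
  then show ?thesis
    using A unfolding invertible_mat_def inverts_mat_def by auto
qed

lemma fixpoints_eq_inverse_mult:
  fixes M B :: "'a::comm_ring_1 mat"
  assumes M: "M \<in> carrier_mat n n" and Y: "Y \<in> carrier_vec n"
    and right: "inverts_mat (1\<^sub>m n - M) B" and left: "inverts_mat B (1\<^sub>m n - M)"
  shows "{x \<in> carrier_vec n. x = M *\<^sub>v x + Y} = {B *\<^sub>v Y}"
proof -
  have IM: "1\<^sub>m n - M \<in> carrier_mat n n"
    using M by (simp add: minus_carrier_mat)
  have BIM: "(1\<^sub>m n - M) * B = 1\<^sub>m n"
    using right M unfolding inverts_mat_def by simp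
  have "dim_row B = n"
    using arg_cong[OF left[unfolded inverts_mat_def], of dim_col] M by simp
  moreover have "dim_col B = n"
    using arg_cong[OF BIM, of dim_col] by simp
  ultimately have B: "B \<in> carrier_mat n n" and BMI: "B * (1\<^sub>m n - M) = 1\<^sub>m n"
    using left unfolding inverts_mat_def by auto
  show ?thesis
  proof (intro equalityI subsetI)
    fix x assume "x \<in> {x \<in> carrier_vec n. x = M *\<^sub>v x + Y}"
    then have x: "x \<in> carrier_vec n" and "(1\<^sub>m n - M) *\<^sub>v x = Y"
      using fixpoint_iff_one_minus_mult[OF M _ Y] by auto
    then have "B *\<^sub>v Y = (B * (1\<^sub>m n - M)) *\<^sub>v x"
      using B IM by simp
    then show "x \<in> {B *\<^sub>v Y}"
      using BMI x by simp
  next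
    fix x assume "x \<in> {B *\<^sub>v Y}"
    then have x: "x = B *\<^sub>v Y" and xc: "x \<in> carrier_vec n"
      using B Y by auto
    have "(1\<^sub>m n - M) *\<^sub>v x = ((1\<^sub>m n - M) * B) *\<^sub>v Y"
      using x B IM Y by simp
    then show "x \<in> {x \<in> carrier_vec n. x = M *\<^sub>v x + Y}"
      using BIM Y xc fixpoint_iff_one_minus_mult[OF M xc Y] by simp
  qed
qed

lemma defined_goal_cases:
  "H \<in> defined_goals R s lp \<Longrightarrow> H = Qa lp \<or> (is_p H \<and> H \<in> provable R s lp)"
  by (induction rule: defined_goals.induct) (auto simp: bodies_def)

lemma Msw_not_defined_goal: "Msw r \<notin> defined_goals R s lp"
  using defined_goal_cases by fastforce

fun goal_rank :: "('n, 't) atom \<Rightarrow> nat \<times> int" where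
  "goal_rank (Qa l) = (Suc (length l), 0)"
| "goal_rank (Pa \<gamma> u w) = (length u, - int (length w))"
| "goal_rank (Msw r) = (0, 0)"

lemma scc_subset_defined_goals: "is_scc R s lp S \<Longrightarrow> S \<subseteq> defined_goals R s lp"
  unfolding is_scc_def by auto

text \<open>Body of the clause (C3a if w = \<epsilon>, otherwise C3b with v = w and \<beta> = \<epsilon>) that derives
  p(A\<beta>, u, w) from p(\<alpha>, u, w) via the rule r = A\<rightarrow>\<alpha>.\<close>
definition corner_body :: "('n, 't) rule \<Rightarrow> 't list \<Rightarrow> 't list \<Rightarrow> ('n, 't) atom list" where
  "corner_body r u w =
     (if w = [] then [Msw r, Pa (snd r) u []] else [Msw r, Pa (snd r) u w, Pa [] w w])"

definition left_corner :: "('n, 't) rule set \<Rightarrow> ('n, 't) atom \<Rightarrow> ('n, 't) atom \<Rightarrow> bool" where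
  "left_corner R H C \<longleftrightarrow>
     (\<exists>A \<beta> \<alpha> u w. H = Pa (NT A # \<beta>) u w \<and> (w = [] \<or> \<beta> = []) \<and> (A, \<alpha>) \<in> R \<and> C = Pa \<alpha> u w)"

lemma corner_body_in_bodies:
  assumes "(A, \<alpha>) \<in> R" and "w = [] \<or> \<beta> = []" and "Pa \<alpha> u w \<in> provable R s lp"
  shows "corner_body (A, \<alpha>) u w \<in> bodies R s lp (Pa (NT A # \<beta>) u w)"
proof -
  have "Pa [] w w \<in> provable R s lp"
    by (rule provable.intros[OF clauses.C1]) simp
  then show ?thesis
    using assms clauses.C3a[of A \<alpha> R] clauses.C3b[of A \<alpha> R w]
    by (auto simp: corner_body_def bodies_def)
qed

lemma bodies_Pa_Nil: "bodies R s lp (Pa [] w w) = {[]}"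
  unfolding bodies_def by (auto elim: clauses.cases intro: clauses.C1)

locale epsilon_free =
  fixes R :: "('n, 't) rule set"
  assumes rhs_nonempty: "(A, \<alpha>) \<in> R \<Longrightarrow> \<alpha> \<noteq> []"
begin

lemma provable_Pa_suffix:
  assumes "Pa \<gamma> u v \<in> provable R s lp"
  obtains x where "u = x @ v" and "\<gamma> = [] \<longleftrightarrow> x = []"
proof -
  have "\<forall>\<gamma> u v. H = Pa \<gamma> u v \<longrightarrow> (\<exists>x. u = x @ v \<and> (\<gamma> = [] \<longleftrightarrow> x = []))"
    if "H \<in> provable R s lp" for H
    using that
  proof (induction H rule: provable.induct)
    case (1 H b)
    have IH: "\<exists>x. u = x @ v \<and> (\<gamma> = [] \<longleftrightarrow> x = [])" if "Pa \<gamma> u v \<in> set b" for \<gamma> u v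
      using 1(2) that by fastforce
    from 1(1) show ?case
    proof (cases rule: clauses.cases)
      case (C1 u)
      then show ?thesis
        by (intro allI impI exI[of _ "[]"]) simp
    next
      case (C2a a \<beta>)
      then show ?thesis
        by (intro allI impI exI[of _ "[a]"]) simp
    next
      case (C2b v a \<beta> w)
      then obtain x where "v = x @ w"
        using IH[of \<beta> v w] by auto
      then show ?thesis
        using C2b by (intro allI impI exI[of _ "a # x"]) auto
    next
      case (C3a A \<alpha> \<beta> u)
      then obtain x where "u = x" "\<alpha> = [] \<longleftrightarrow> x = []"
        using IH[of \<alpha> u "[]"] by auto
      then show ?thesis
        using C3a rhs_nonempty by (intro allI impI exI[of _ x]) auto
    next
      case (C3b A \<alpha> v \<beta> u w)
      obtain x1 where "u = x1 @ v" "\<alpha> = [] \<longleftrightarrow> x1 = []"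
        using IH[of \<alpha> u v] C3b by auto
      moreover obtain x2 where "v = x2 @ w"
        using IH[of \<beta> v w] C3b by auto
      ultimately show ?thesis
        using C3b rhs_nonempty by (intro allI impI exI[of _ "x1 @ x2"]) auto
    qed simp
  qed
  then show ?thesis
    using assms that by blast
qed

lemma goal_rank_parent_le:
  assumes "(H, C) \<in> parent_rel R s lp"
  shows "goal_rank C \<le> goal_rank H"
proof -
  from assms obtain b where b: "(H, b) \<in> clauses R s lp" "C \<in> set b"
    and provable_body: "\<forall>C\<in>set b. is_p C \<longrightarrow> C \<in> provable R s lp"
    unfolding parent_rel_def bodies_def by auto
  from b(1) show ?thesis
  proof (cases rule: clauses.cases)
    case (C3b A \<alpha> v \<beta> u w)
    have "Pa \<alpha> u v \<in> provable R s lp" and "Pa \<beta> v w \<in> provable R s lp"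
      using provable_body C3b by auto
    obtain x1 where "u = x1 @ v" and "\<alpha> = [] \<longleftrightarrow> x1 = []"
      using \<open>Pa \<alpha> u v \<in> provable R s lp\<close> by (rule provable_Pa_suffix)
    moreover obtain x2 where "v = x2 @ w" and "\<beta> = [] \<longleftrightarrow> x2 = []"
      using \<open>Pa \<beta> v w \<in> provable R s lp\<close> by (rule provable_Pa_suffix)
    ultimately have "length v < length u" and "length w \<le> length v"
      using C3b rhs_nonempty by auto
    then show ?thesis
      using C3b b(2) by (auto simp: less_eq_prod_def)
  qed (use b(2) in \<open>auto simp: less_eq_prod_def\<close>)
qed

lemma goal_rank_ancestor_le:
  assumes "(H, C) \<in> (parent_rel R s lp)\<^sup>+"
  shows "goal_rank C \<le> goal_rank H"
  using assms
proof (induction rule: trancl_induct)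
  case (step C C')
  then show ?case
    using goal_rank_parent_le[OF step(2)] by simp
qed (rule goal_rank_parent_le)

lemma goal_rank_scc_eq:
  assumes "is_scc R s lp S" and "B \<in> S" and "B' \<in> S"
  shows "goal_rank B = goal_rank B'"
proof -
  from \<open>is_scc R s lp S\<close> obtain A where S: "S = {B \<in> defined_goals R s lp. A = B \<or>
      ((A, B) \<in> (parent_rel R s lp)\<^sup>+ \<and> (B, A) \<in> (parent_rel R s lp)\<^sup>+)}"
    unfolding is_scc_def by auto
  have "goal_rank C = goal_rank A" if "C \<in> S" for C
    using that S goal_rank_ancestor_le by (auto intro: order.antisym)
  then show ?thesis
    using assms(2,3) by simp
qed

lemma scc_body_is_corner_body:
  assumes scc: "is_scc R s lp S" and "H \<in> S" and "C \<in> S"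
    and "b \<in> bodies R s lp H" and "C \<in> set b"
  obtains A \<beta> \<alpha> u w where "H = Pa (NT A # \<beta>) u w" and "w = [] \<or> \<beta> = []"
    and "(A, \<alpha>) \<in> R" and "C = Pa \<alpha> u w" and "b = corner_body (A, \<alpha>) u w"
proof -
  have rank: "goal_rank C = goal_rank H"
    using goal_rank_scc_eq[OF scc \<open>C \<in> S\<close> \<open>H \<in> S\<close>] .
  have not_Msw: "C \<noteq> Msw r" for r
    using \<open>C \<in> S\<close> scc_subset_defined_goals[OF scc] Msw_not_defined_goal[of r R s lp] by blast
  from \<open>b \<in> bodies R s lp H\<close> have "(H, b) \<in> clauses R s lp"
    and provable_body: "\<forall>C\<in>set b. is_p C \<longrightarrow> C \<in> provable R s lp"
    unfolding bodies_def by auto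
  then show thesis
  proof (cases rule: clauses.cases)
    case (C3a A \<alpha> \<beta> u)
    then show thesis
      using that[of A \<beta> u "[]" \<alpha>] \<open>C \<in> set b\<close> not_Msw by (auto simp: corner_body_def)
  next
    case (C3b A \<alpha> v \<beta> u w)
    have "Pa \<alpha> u v \<in> provable R s lp" and "Pa \<beta> v w \<in> provable R s lp"
      using provable_body C3b by auto
    obtain x1 where x1: "u = x1 @ v" "\<alpha> = [] \<longleftrightarrow> x1 = []"
      using \<open>Pa \<alpha> u v \<in> provable R s lp\<close> by (rule provable_Pa_suffix)
    obtain x2 where x2: "v = x2 @ w" "\<beta> = [] \<longleftrightarrow> x2 = []"
      using \<open>Pa \<beta> v w \<in> provable R s lp\<close> by (rule provable_Pa_suffix)
    have "x1 \<noteq> []"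
      using x1 rhs_nonempty C3b by auto
    then have "C \<noteq> Pa \<beta> v w"
      using rank C3b x1 by auto
    then have C: "C = Pa \<alpha> u v"
      using \<open>C \<in> set b\<close> C3b not_Msw by auto
    then have "x2 = []"
      using rank C3b x2 by auto
    then show thesis
      using that[of A \<beta> u w \<alpha>] C3b C x2 by (auto simp: corner_body_def)
  qed (use \<open>C \<in> set b\<close> rank in auto)
qed

lemma finite_bodies:
  assumes "finite R"
  shows "finite (bodies R s lp H)"
proof (cases H)
  case (Qa l)
  have "bodies R s lp H \<subseteq> {[Pa [NT s] lp []]}"
    by (auto simp: Qa bodies_def elim: clauses.cases)
  then show ?thesis
    by (rule finite_subset) simp
next
  case (Msw r)
  have "bodies R s lp H = {}"
    by (auto simp: Msw bodies_def elim: clauses.cases)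
  then show ?thesis
    by simp
next
  case (Pa \<gamma> u w)
  let ?suffixes = "(\<lambda>i. drop i u) ` {..length u}"
  let ?short = "(\<lambda>r. [Msw r, Pa (snd r) u []]) ` R"
  let ?long = "(\<lambda>(r, v). [Msw r, Pa (snd r) u v, Pa (tl \<gamma>) v w]) ` (R \<times> ?suffixes)"
  have "bodies R s lp H \<subseteq> {[], [Pa (tl \<gamma>) (tl u) w]} \<union> ?short \<union> ?long"
  proof
    fix b assume "b \<in> bodies R s lp H"
    then have "(Pa \<gamma> u w, b) \<in> clauses R s lp"
      and provable_body: "\<forall>C\<in>set b. is_p C \<longrightarrow> C \<in> provable R s lp"
      unfolding bodies_def Pa by auto
    then show "b \<in> {[], [Pa (tl \<gamma>) (tl u) w]} \<union> ?short \<union> ?long"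
    proof (cases rule: clauses.cases)
      case (C3a A \<alpha> \<beta>)
      then have "b \<in> ?short"
        by (intro image_eqI[of _ _ "(A, \<alpha>)"]) simp_all
      then show ?thesis
        by blast
    next
      case (C3b A \<alpha> v \<beta>)
      have "Pa \<alpha> u v \<in> provable R s lp"
        using provable_body C3b by auto
      then obtain x where "u = x @ v" and "\<alpha> = [] \<longleftrightarrow> x = []"
        by (rule provable_Pa_suffix)
      then have "v \<in> ?suffixes"
        by (intro image_eqI[of _ _ "length x"]) simp_all
      then have "b \<in> ?long"
        using C3b by (intro image_eqI[of _ _ "((A, \<alpha>), v)"]) simp_all
      then show ?thesis
        by blast
    qed simp_all
  qed
  moreover have "finite ({[], [Pa (tl \<gamma>) (tl u) w]} \<union> ?short \<union> ?long)"
    using \<open>finite R\<close> by simp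
  ultimately show ?thesis
    by (rule finite_subset)
qed

end

lemma valid_tree_Nd_if_nts_of:
  "valid_tree R t \<Longrightarrow> A \<in> nts_of t \<Longrightarrow> \<exists>ts. valid_tree R (Nd A ts)"
  by (induction t) auto

lemma no_valid_tree_if_left_closed:
  assumes closed: "\<And>H. H \<in> T \<Longrightarrow>
      \<exists>A \<beta> u w. H = Pa (NT A # \<beta>) u w \<and> (\<forall>\<alpha>. (A, \<alpha>) \<in> R \<longrightarrow> Pa \<alpha> u w \<in> T)"
  shows "valid_tree R t \<Longrightarrow> root t = NT A \<Longrightarrow> Pa (NT A # \<beta>) u w \<in> T \<Longrightarrow> False"
proof (induction t arbitrary: A \<beta> u w)
  case (Nd B ts)
  then have "(A, map root ts) \<in> R"
    by simp
  then have "Pa (map root ts) u w \<in> T"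
    using closed[OF Nd.prems(3)] by auto
  then obtain B' \<beta>' where "map root ts = NT B' # \<beta>'"
    using closed by force
  then obtain t1 ts' where "ts = t1 # ts'" and "root t1 = NT B'"
    by (cases ts) auto
  then show False
    using Nd.IH[of t1 B' \<beta>' u w] Nd.prems(1) \<open>Pa (map root ts) u w \<in> T\<close> \<open>map root ts = NT B' # \<beta>'\<close>
    by simp
qed simp

locale scc_system = epsilon_free R
  for R :: "('n, 't) rule set" +
  fixes s :: 'n and \<theta> :: "('n, 't) rule \<Rightarrow> real" and lp :: "'t list"
    and X :: "('n, 't) atom \<Rightarrow> real" and S :: "('n, 't) atom set"
    and K :: nat and e :: "nat \<Rightarrow> ('n, 't) atom"
  assumes finite_rules: "finite R"
    and theta_pos: "r \<in> R \<Longrightarrow> 0 < \<theta> r"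
    and theta_sum: "(\<Sum>r \<in> {r \<in> R. fst r = A}. \<theta> r) = 1"
    and useful: "\<exists>t \<in> derivs_from R s. A \<in> nts_of t"
    and solution: "solves_eq R s lp \<theta> X"
    and scc: "is_scc R s lp S"
    and enumeration: "bij_betw e {..<K} S"
begin

lemma finite_scc: "finite S"
  using enumeration bij_betw_finite by blast

lemma scc_defined: "S \<subseteq> defined_goals R s lp"
  using scc by (rule scc_subset_defined_goals)

lemma scc_provable: "Pa \<gamma> u w \<in> S \<Longrightarrow> Pa \<gamma> u w \<in> provable R s lp"
  using scc_defined defined_goal_cases by fastforce

lemma atom_val_scc: "C \<in> S \<Longrightarrow> atom_val \<theta> Z C = Z C"
  using scc_defined Msw_not_defined_goal[of _ R s lp] by (cases C) auto

lemma sum_over_enumeration: "(\<Sum>k<K. f (e k)) = (\<Sum>C\<in>S. f C)"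
  using enumeration by (rule sum.reindex_bij_betw)

lemma solution_trivial_goal: "Pa [] w w \<in> defined_goals R s lp \<Longrightarrow> X (Pa [] w w) = 1"
  using solution unfolding solves_eq_def eq_rhs_def by (simp add: bodies_Pa_Nil)

lemma scc_M_corner:
  assumes H: "Pa (NT A # \<beta>) u w \<in> S" and w: "w = [] \<or> \<beta> = []" and r: "(A, \<alpha>) \<in> R"
    and C: "Pa \<alpha> u w \<in> S"
  shows "scc_M R s lp \<theta> X (Pa (NT A # \<beta>) u w) (Pa \<alpha> u w) = \<theta> (A, \<alpha>)"
proof -
  let ?H = "Pa (NT A # \<beta>) u w" and ?b = "corner_body (A, \<alpha>) u w"
  have b: "?b \<in> bodies R s lp ?H"
    using r w scc_provable[OF C] by (rule corner_body_in_bodies)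
  have bodies_through_C: "{b \<in> bodies R s lp ?H. Pa \<alpha> u w \<in> set b} = {?b}"
  proof (intro equalityI subsetI)
    fix b assume "b \<in> {b \<in> bodies R s lp ?H. Pa \<alpha> u w \<in> set b}"
    then have "b \<in> bodies R s lp ?H" and "Pa \<alpha> u w \<in> set b"
      by auto
    then obtain A' \<beta>' \<alpha>' u' w' where "?H = Pa (NT A' # \<beta>') u' w'" and "w' = [] \<or> \<beta>' = []"
      and "(A', \<alpha>') \<in> R" and "Pa \<alpha> u w = Pa \<alpha>' u' w'" and "b = corner_body (A', \<alpha>') u' w'"
      by (rule scc_body_is_corner_body[OF scc H C])
    then show "b \<in> {?b}"
      by simp
  next
    fix b assume "b \<in> {?b}"
    then show "b \<in> {b \<in> bodies R s lp ?H. Pa \<alpha> u w \<in> set b}"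
      using b by (simp add: corner_body_def)
  qed
  show ?thesis
  proof (cases "w = []")
    case True
    then show ?thesis
      unfolding scc_M_def bodies_through_C by (simp add: corner_body_def)
  next
    case False
    then have "Pa [] w w \<in> set ?b"
      by (simp add: corner_body_def)
    have "?H \<in> defined_goals R s lp"
      using H scc_defined by blast
    then have "Pa [] w w \<in> defined_goals R s lp"
      by (rule defined_goals.step[OF _ b \<open>Pa [] w w \<in> set ?b\<close>]) simp
    then have "X (Pa [] w w) = 1"
      by (rule solution_trivial_goal)
    then show ?thesis
      using False unfolding scc_M_def bodies_through_C by (simp add: corner_body_def)
  qed
qed

lemma scc_M_eq_0:
  assumes H: "H \<in> S" and C: "C \<in> S" and "\<not> left_corner R H C"
  shows "scc_M R s lp \<theta> Z H C = 0"
proof -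
  have no_bodies: "{b \<in> bodies R s lp H. C \<in> set b} = {}"
  proof (rule equals0I)
    fix b assume "b \<in> {b \<in> bodies R s lp H. C \<in> set b}"
    then have "b \<in> bodies R s lp H" and "C \<in> set b"
      by simp_all
    then obtain A \<beta> \<alpha> u w where "H = Pa (NT A # \<beta>) u w" and "w = [] \<or> \<beta> = []"
      and "(A, \<alpha>) \<in> R" and "C = Pa \<alpha> u w" and "b = corner_body (A, \<alpha>) u w"
      by (rule scc_body_is_corner_body[OF scc H C])
    then have "left_corner R H C"
      unfolding left_corner_def by blast
    with \<open>\<not> left_corner R H C\<close> show False
      by contradiction
  qed
  show ?thesis
    unfolding scc_M_def no_bodies by simp
qed

lemma scc_M_nonneg:
  assumes "H \<in> S" and "C \<in> S"
  shows "0 \<le> scc_M R s lp \<theta> X H C"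
proof (cases "left_corner R H C")
  case True
  then obtain A \<beta> \<alpha> u w where H: "H = Pa (NT A # \<beta>) u w" and "w = [] \<or> \<beta> = []"
    and r: "(A, \<alpha>) \<in> R" and C: "C = Pa \<alpha> u w"
    unfolding left_corner_def by blast
  then have "scc_M R s lp \<theta> X H C = \<theta> (A, \<alpha>)"
    using scc_M_corner assms by simp
  then show ?thesis
    using theta_pos[OF r] by simp
next
  case False
  then show ?thesis
    using scc_M_eq_0 assms by simp
qed

lemma scc_row_sum_corner:
  assumes H: "Pa (NT A # \<beta>) u w \<in> S" and w: "w = [] \<or> \<beta> = []"
  shows "(\<Sum>C\<in>S. scc_M R s lp \<theta> X (Pa (NT A # \<beta>) u w) C)
    = (\<Sum>r \<in> {r \<in> R. fst r = A \<and> Pa (snd r) u w \<in> S}. \<theta> r)"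
proof -
  let ?H = "Pa (NT A # \<beta>) u w" and ?child = "\<lambda>r. Pa (snd r) u w"
  let ?RS = "{r \<in> R. fst r = A \<and> Pa (snd r) u w \<in> S}"
  have "scc_M R s lp \<theta> X ?H C = 0" if C: "C \<in> S - ?child ` ?RS" for C
  proof (rule scc_M_eq_0)
    show "\<not> left_corner R ?H C"
    proof
      assume "left_corner R ?H C"
      then obtain \<alpha> where "(A, \<alpha>) \<in> R" and "C = Pa \<alpha> u w"
        unfolding left_corner_def by blast
      then have "C \<in> ?child ` ?RS"
        using C by (intro image_eqI[of _ _ "(A, \<alpha>)"]) simp_all
      with C show False
        by blast
    qed
  qed (use H C in simp_all)
  then have "(\<Sum>C\<in>S. scc_M R s lp \<theta> X ?H C) = (\<Sum>C \<in> ?child ` ?RS. scc_M R s lp \<theta> X ?H C)"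
    by (intro sum.mono_neutral_right[OF finite_scc]) auto
  also have "\<dots> = (\<Sum>r\<in>?RS. scc_M R s lp \<theta> X ?H (?child r))"
  proof -
    have "inj_on ?child ?RS"
      by (auto intro!: inj_onI simp: prod_eq_iff)
    then show ?thesis
      by (simp add: sum.reindex)
  qed
  also have "\<dots> = (\<Sum>r\<in>?RS. \<theta> r)"
  proof (rule sum.cong[OF refl])
    fix r assume "r \<in> ?RS"
    then have "r = (A, snd r)" and "(A, snd r) \<in> R" and "?child r \<in> S"
      by auto
    then show "scc_M R s lp \<theta> X ?H (?child r) = \<theta> r"
      using scc_M_corner[OF H w] by simp
  qed
  finally show ?thesis .
qed

lemma scc_row_sum_cases:
  assumes "H \<in> S"
  obtains (corner) A \<beta> u w where "H = Pa (NT A # \<beta>) u w" and "w = [] \<or> \<beta> = []"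
      and "(\<Sum>C\<in>S. scc_M R s lp \<theta> X H C) = (\<Sum>r \<in> {r \<in> R. fst r = A \<and> Pa (snd r) u w \<in> S}. \<theta> r)"
  | (other) "(\<Sum>C\<in>S. scc_M R s lp \<theta> X H C) = 0"
proof (cases "\<exists>A \<beta> u w. H = Pa (NT A # \<beta>) u w \<and> (w = [] \<or> \<beta> = [])")
  case True
  then obtain A \<beta> u w where H: "H = Pa (NT A # \<beta>) u w" and w: "w = [] \<or> \<beta> = []"
    by blast
  then show ?thesis
    using corner scc_row_sum_corner \<open>H \<in> S\<close> by simp
next
  case False
  then have "\<not> left_corner R H C" for C
    unfolding left_corner_def by blast
  then have "(\<Sum>C\<in>S. scc_M R s lp \<theta> X H C) = 0"
    using scc_M_eq_0 \<open>H \<in> S\<close> by (intro sum.neutral) blast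
  then show ?thesis
    by (rule other)
qed

lemma scc_row_sum_le_1:
  assumes "H \<in> S"
  shows "(\<Sum>C\<in>S. scc_M R s lp \<theta> X H C) \<le> 1"
  using assms
proof (cases rule: scc_row_sum_cases)
  case (corner A \<beta> u w)
  have "(\<Sum>r \<in> {r \<in> R. fst r = A \<and> Pa (snd r) u w \<in> S}. \<theta> r) \<le> (\<Sum>r \<in> {r \<in> R. fst r = A}. \<theta> r)"
    using finite_rules theta_pos by (intro sum_mono2) (auto intro: less_imp_le)
  then show ?thesis
    using corner theta_sum by simp
qed simp

lemma scc_row_sum_eq_1_closed:
  assumes "H \<in> S" and "(\<Sum>C\<in>S. scc_M R s lp \<theta> X H C) = 1"
  obtains A \<beta> u w where "H = Pa (NT A # \<beta>) u w" and "w = [] \<or> \<beta> = []"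
    and "\<And>\<alpha>. (A, \<alpha>) \<in> R \<Longrightarrow> Pa \<alpha> u w \<in> S"
  using \<open>H \<in> S\<close>
proof (cases rule: scc_row_sum_cases)
  case (corner A \<beta> u w)
  have "Pa \<alpha> u w \<in> S" if "(A, \<alpha>) \<in> R" for \<alpha>
  proof (rule ccontr)
    assume "Pa \<alpha> u w \<notin> S"
    then have "(\<Sum>r \<in> {r \<in> R. fst r = A \<and> Pa (snd r) u w \<in> S}. \<theta> r) < (\<Sum>r \<in> {r \<in> R. fst r = A}. \<theta> r)"
      using finite_rules theta_pos that
      by (intro sum_strict_mono2[where b = "(A, \<alpha>)"]) (auto intro: less_imp_le)
    then show False
      using corner assms(2) theta_sum by simp
  qed
  then show thesis
    using that corner by blast
qed (use assms(2) in simp)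

lemma scc_body_unique:
  assumes "H \<in> S" and "b \<in> bodies R s lp H"
    and "C \<in> S" and "C \<in> set b" and "C' \<in> S" and "C' \<in> set b"
  shows "C = C'"
proof -
  obtain A \<beta> \<alpha> u w where H: "H = Pa (NT A # \<beta>) u w" and "w = [] \<or> \<beta> = []" and "(A, \<alpha>) \<in> R"
    and C: "C = Pa \<alpha> u w" and b: "b = corner_body (A, \<alpha>) u w"
    using assms(2,4) by (rule scc_body_is_corner_body[OF scc assms(1,3)])
  obtain A' \<beta>' \<alpha>' u' w' where H': "H = Pa (NT A' # \<beta>') u' w'" and "w' = [] \<or> \<beta>' = []"
    and "(A', \<alpha>') \<in> R" and C': "C' = Pa \<alpha>' u' w'" and b': "b = corner_body (A', \<alpha>') u' w'"
    using assms(2,6) by (rule scc_body_is_corner_body[OF scc assms(1,5)])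
  have "hd b = Msw (A, \<alpha>)"
    unfolding b by (simp add: corner_body_def)
  moreover have "hd b = Msw (A', \<alpha>')"
    unfolding b' by (simp add: corner_body_def)
  ultimately show ?thesis
    using H H' C C' by simp
qed

lemma eq_rhs_scc_split:
  assumes H: "H \<in> S"
  shows "eq_rhs R s lp \<theta> Z H = (\<Sum>C\<in>S. scc_M R s lp \<theta> Z H C * Z C) + scc_Y R s lp \<theta> Z S H"
proof -
  let ?F = "\<lambda>b. prod_list (map (atom_val \<theta> Z) b)"
  let ?B = "bodies R s lp H"
  let ?through = "\<lambda>C. {b \<in> ?B. C \<in> set b}"
  have finite_B: "finite ?B"
    using finite_rules by (rule finite_bodies)
  have "eq_rhs R s lp \<theta> Z H = sum ?F {b \<in> ?B. set b \<inter> S = {}} + sum ?F {b \<in> ?B. set b \<inter> S \<noteq> {}}"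
    unfolding eq_rhs_def using finite_B
    by (subst sum.union_disjoint[symmetric]) (auto intro: sum.cong)
  also have "{b \<in> ?B. set b \<inter> S \<noteq> {}} = (\<Union>C\<in>S. ?through C)"
    by blast
  also have "sum ?F (\<Union>C\<in>S. ?through C) = (\<Sum>C\<in>S. sum ?F (?through C))"
    using finite_scc finite_B scc_body_unique[OF H]
    by (intro sum.UNION_disjoint) auto
  also have "\<dots> = (\<Sum>C\<in>S. scc_M R s lp \<theta> Z H C * Z C)"
  proof (rule sum.cong[OF refl])
    fix C assume "C \<in> S"
    then have "sum ?F (?through C) = (\<Sum>b\<in>?through C. Z C * prod_list (map (atom_val \<theta> Z) (remove1 C b)))"
      by (intro sum.cong) (auto simp: prod_list_map_remove1[of C] atom_val_scc)
    then show "sum ?F (?through C) = scc_M R s lp \<theta> Z H C * Z C"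
      by (simp add: scc_M_def sum_distrib_left mult.commute)
  qed
  finally show ?thesis
    by (simp add: scc_Y_def)
qed

lemma scc_mat_mult_vec_nth:
  assumes "x \<in> carrier_vec K" and "j < K"
  shows "(scc_mat R s lp \<theta> X K e *\<^sub>v x) $ j = (\<Sum>k<K. scc_M R s lp \<theta> X (e j) (e k) * x $ k)"
  using assms by (auto simp: scc_mat_def scalar_prod_def atLeast0LessThan intro: sum.cong)

lemma solution_scc_fixpoint:
  "vec K (\<lambda>j. X (e j))
     = scc_mat R s lp \<theta> X K e *\<^sub>v vec K (\<lambda>j. X (e j)) + scc_vec R s lp \<theta> X S K e"
proof (rule eq_vecI)
  fix j assume "j < dim_vec (scc_mat R s lp \<theta> X K e *\<^sub>v vec K (\<lambda>j. X (e j)) + scc_vec R s lp \<theta> X S K e)"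
  then have j: "j < K"
    by (simp add: scc_vec_def)
  then have "e j \<in> S"
    using enumeration bij_betwE by blast
  then have "X (e j) = (\<Sum>C\<in>S. scc_M R s lp \<theta> X (e j) C * X C) + scc_Y R s lp \<theta> X S (e j)"
    using solution scc_defined eq_rhs_scc_split unfolding solves_eq_def by auto
  then show "vec K (\<lambda>j. X (e j)) $ j
      = (scc_mat R s lp \<theta> X K e *\<^sub>v vec K (\<lambda>j. X (e j)) + scc_vec R s lp \<theta> X S K e) $ j"
    using j by (simp add: scc_mat_mult_vec_nth scc_vec_def sum_over_enumeration[where f = "\<lambda>C. scc_M R s lp \<theta> X (e j) C * X C"])
qed (simp add: scc_mat_def scc_vec_def)

lemma max_modulus_goal_left_closed:
  assumes x: "x \<in> carrier_vec K" and fixpoint: "scc_mat R s lp \<theta> X K e *\<^sub>v x = x"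
    and j: "j < K" and maximal: "\<And>k. k < K \<Longrightarrow> \<bar>x $ k\<bar> \<le> \<bar>x $ j\<bar>" and "x $ j \<noteq> 0"
  obtains A \<beta> u w where "e j = Pa (NT A # \<beta>) u w"
    and "\<And>\<alpha>. (A, \<alpha>) \<in> R \<Longrightarrow> \<exists>k<K. e k = Pa \<alpha> u w \<and> \<bar>x $ k\<bar> = \<bar>x $ j\<bar>"
proof -
  let ?M = "\<lambda>j k. scc_M R s lp \<theta> X (e j) (e k)"
  have in_S: "e k \<in> S" if "k < K" for k
    using enumeration that bij_betwE by blast
  have nonneg: "0 \<le> ?M j k" if "k \<in> {..<K}" for k
    using scc_M_nonneg in_S j that by simp
  have "(\<Sum>k\<in>{..<K}. ?M j k) \<le> 1"
    using scc_row_sum_le_1[OF in_S[OF j]] by (simp add: sum_over_enumeration)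
  moreover have "x $ j = (\<Sum>k\<in>{..<K}. ?M j k * x $ k)"
    using scc_mat_mult_vec_nth[OF x j] fixpoint by simp
  moreover have "\<bar>x $ k\<bar> \<le> \<bar>x $ j\<bar>" if "k \<in> {..<K}" for k
    using maximal that by simp
  ultimately have "(\<Sum>k\<in>{..<K}. ?M j k) = 1"
    and propagate: "\<And>k. k \<in> {..<K} \<Longrightarrow> 0 < ?M j k \<Longrightarrow> \<bar>x $ k\<bar> = \<bar>x $ j\<bar>"
    using max_modulus_of_substochastic_fixpoint[of "{..<K}" j ?M "\<lambda>k. x $ k", OF _ _ nonneg]
      j \<open>x $ j \<noteq> 0\<close> by simp_all
  then have "(\<Sum>C\<in>S. scc_M R s lp \<theta> X (e j) C) = 1"
    by (simp add: sum_over_enumeration)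
  then obtain A \<beta> u w where ej: "e j = Pa (NT A # \<beta>) u w" and w: "w = [] \<or> \<beta> = []"
    and closed: "\<And>\<alpha>. (A, \<alpha>) \<in> R \<Longrightarrow> Pa \<alpha> u w \<in> S"
    by (rule scc_row_sum_eq_1_closed[OF in_S[OF j]]) blast
  have "\<exists>k<K. e k = Pa \<alpha> u w \<and> \<bar>x $ k\<bar> = \<bar>x $ j\<bar>" if r: "(A, \<alpha>) \<in> R" for \<alpha>
  proof -
    obtain k where k: "k < K" "e k = Pa \<alpha> u w"
      using closed[OF r] enumeration by (auto simp: bij_betw_def)
    have "?M j k = \<theta> (A, \<alpha>)"
      using scc_M_corner[OF _ w r closed[OF r]] in_S[OF j] ej k(2) by simp
    then show ?thesis
      using propagate[of k] theta_pos[OF r] k by auto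
  qed
  with ej show thesis
    by (rule that)
qed

lemma scc_mat_fixpoint_eq_0:
  assumes x: "x \<in> carrier_vec K" and fixpoint: "scc_mat R s lp \<theta> X K e *\<^sub>v x = x"
  shows "x = 0\<^sub>v K"
proof (rule ccontr)
  assume "x \<noteq> 0\<^sub>v K"
  then obtain j1 where j1: "j1 < K" "x $ j1 \<noteq> 0"
    using x by (auto simp: vec_eq_iff)
  define m where "m = Max ((\<lambda>k. \<bar>x $ k\<bar>) ` {..<K})"
  have le_m: "\<bar>x $ k\<bar> \<le> m" if "k < K" for k
    unfolding m_def using that by (intro Max_ge) auto
  have "m \<in> (\<lambda>k. \<bar>x $ k\<bar>) ` {..<K}"
    unfolding m_def using j1 by (intro Max_in) auto
  then obtain j0 where j0: "j0 < K" "\<bar>x $ j0\<bar> = m"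
    by auto
  have "m > 0"
    using le_m[OF j1(1)] j1(2) by linarith
  define T where "T = e ` {k. k < K \<and> \<bar>x $ k\<bar> = m}"
  have closed: "\<exists>A \<beta> u w. H = Pa (NT A # \<beta>) u w \<and> (\<forall>\<alpha>. (A, \<alpha>) \<in> R \<longrightarrow> Pa \<alpha> u w \<in> T)"
    if "H \<in> T" for H
  proof -
    from that obtain k where k: "k < K" "H = e k" "\<bar>x $ k\<bar> = m"
      unfolding T_def by auto
    obtain A \<beta> u w where ek: "e k = Pa (NT A # \<beta>) u w"
      and child: "\<And>\<alpha>. (A, \<alpha>) \<in> R \<Longrightarrow> \<exists>k'<K. e k' = Pa \<alpha> u w \<and> \<bar>x $ k'\<bar> = \<bar>x $ k\<bar>"
      by (rule max_modulus_goal_left_closed[OF x fixpoint k(1)]) (use le_m k(3) \<open>m > 0\<close> in auto)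
    have "Pa \<alpha> u w \<in> T" if r: "(A, \<alpha>) \<in> R" for \<alpha>
    proof -
      obtain k' where "k' < K" "e k' = Pa \<alpha> u w" "\<bar>x $ k'\<bar> = \<bar>x $ k\<bar>"
        using child[OF r] by blast
      then show ?thesis
        unfolding T_def using k(3) by (intro image_eqI[of _ _ k']) simp_all
    qed
    then show ?thesis
      using k(2) ek by blast
  qed
  have "e j0 \<in> T"
    unfolding T_def using j0 by simp
  then obtain A \<beta> u w where ej0: "e j0 = Pa (NT A # \<beta>) u w"
    using closed[OF \<open>e j0 \<in> T\<close>] by blast
  obtain t where t: "t \<in> derivs_from R s" "A \<in> nts_of t"
    using useful[of A] by blast
  then have "valid_tree R t"
    by (simp add: derivs_from_def)
  then have "\<exists>ts. valid_tree R (Nd A ts)"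
    using t(2) by (rule valid_tree_Nd_if_nts_of)
  then obtain ts where "valid_tree R (Nd A ts)"
    by blast
  then show False
    using no_valid_tree_if_left_closed[OF closed, of "Nd A ts" A \<beta> u w] \<open>e j0 \<in> T\<close> ej0 by simp
qed

end

theorem theorem4:
  fixes R :: "('n::finite, 't::finite) rule set" and s :: 'n
    and \<theta> :: "('n, 't) rule \<Rightarrow> real" and lp :: "'t list"
    and Xinf :: "('n, 't) atom \<Rightarrow> real"
    and S :: "('n, 't) atom set" and K :: nat and e :: "nat \<Rightarrow> ('n, 't) atom"
  assumes "consistent_pcfg R s \<theta>"
    and "is_prefix R s lp"
    and "least_nonneg_solution R s lp \<theta> Xinf"
    and "is_scc R s lp S"
    and "bij_betw e {..<K} S"
  shows "invertible_mat (1\<^sub>m K - scc_mat R s lp \<theta> Xinf K e)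
    \<and> (\<forall>B. inverts_mat (1\<^sub>m K - scc_mat R s lp \<theta> Xinf K e) B
            \<and> inverts_mat B (1\<^sub>m K - scc_mat R s lp \<theta> Xinf K e) \<longrightarrow>
          {x \<in> carrier_vec K. x = scc_mat R s lp \<theta> Xinf K e *\<^sub>v x + scc_vec R s lp \<theta> Xinf S K e}
            = {B *\<^sub>v scc_vec R s lp \<theta> Xinf S K e}
          \<and> vec K (\<lambda>j. Xinf (e j)) = B *\<^sub>v scc_vec R s lp \<theta> Xinf S K e)"
proof -
  interpret scc_system R s \<theta> lp Xinf S K e
    using assms(1,3,4,5) unfolding consistent_pcfg_def least_nonneg_solution_def
    by unfold_locales auto
  let ?M = "scc_mat R s lp \<theta> Xinf K e" and ?Y = "scc_vec R s lp \<theta> Xinf S K e"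
  have M: "?M \<in> carrier_mat K K" and Y: "?Y \<in> carrier_vec K"
    by (simp_all add: scc_mat_def scc_vec_def)
  have "invertible_mat (1\<^sub>m K - ?M)"
  proof (rule invertible_mat_if_kernel_trivial)
    fix x assume x: "x \<in> carrier_vec K" and "(1\<^sub>m K - ?M) *\<^sub>v x = 0\<^sub>v K"
    then have "?M *\<^sub>v x = x"
      using fixpoint_iff_one_minus_mult[OF M x zero_carrier_vec] x M by auto
    then show "x = 0\<^sub>v K"
      by (rule scc_mat_fixpoint_eq_0[OF x])
  qed (rule minus_carrier_mat[OF M])
  moreover have "{x \<in> carrier_vec K. x = ?M *\<^sub>v x + ?Y} = {B *\<^sub>v ?Y} \<and> vec K (\<lambda>j. Xinf (e j)) = B *\<^sub>v ?Y"
    if "inverts_mat (1\<^sub>m K - ?M) B" and "inverts_mat B (1\<^sub>m K - ?M)" for B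
  proof -
    have "vec K (\<lambda>j. Xinf (e j)) \<in> {x \<in> carrier_vec K. x = ?M *\<^sub>v x + ?Y}"
      using solution_scc_fixpoint by (blast intro: vec_carrier)
    then show ?thesis
      using fixpoints_eq_inverse_mult[OF M Y that] by blast
  qed
  ultimately show ?thesis
    by blast
qed

end
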